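(* If $\boldsymbol{\mu}$ is a quantum universal semi-density matrix, then $\operatorname{tr}(\boldsymbol{\mu}(N))<1$ for all but finitely many $N\in\mathbb{N}^+$.
   Context: For $N\in\mathbb{N}^+$, $\mathrm{Her}(N)$ is the set of $N\times N$ Hermitian matrices and $\mathrm{Her}_Q(N)$ those with entries in $\{a+ib:a,b\in\mathbb{Q}\}$; $A\leqslant B$ means $B-A$ is positive semi-definite. A lower semicomputable semi-density matrix is a map $\sigma:\mathbb{N}^+\to\bigcup_{N\ge1}\mathrm{Her}(N)$ such that (i) for each $N$, $\sigma(N)\in\mathrm{Her}(N)$, $0\leqslant\sigma(N)$ and $\operatorname{tr}\sigma(N)\le 1$; (ii) there is a total recursive $f:\mathbb{N}^+\times\mathbb{N}\to\bigcup_{N\ge1}\mathrm{Her}_Q(N)$ with, for each $N$, $f(N,k)\in\mathrm{Her}_Q(N)$, $f(N,k)\leqslant f(N,k+1)$ for all $k$, and $\lim_{k\to\infty}f(N,k)=\sigma(N)$. A quantum universal semi-density matrix is a lower semicomputable semi-density matrix $\boldsymbol{\mu}$ such that for every lower semicomputable semi-density matrix $\sigma$ there is $c>0$ with $c\,\sigma(N)\leqslant\boldsymbol{\mu}(N)$ for all $N\in\mathbb{N}^+$. *)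

theory Defs
  imports Complex_Main "HOL-Library.Nat_Bijection"
begin

datatype recf =
    Zr
  | Sc
  | Pj nat
  | Cn recf "recf list"
  | Pr recf recf
  | Mn recf

inductive reval :: "recf \<Rightarrow> nat list \<Rightarrow> nat \<Rightarrow> bool" where
  zr: "reval Zr xs 0"
| sc: "reval Sc [x] (Suc x)"
| pj: "i < length xs \<Longrightarrow> reval (Pj i) xs (xs ! i)"
| cn: "list_all2 (\<lambda>g y. reval g xs y) gs ys \<Longrightarrow> reval f ys z \<Longrightarrow> reval (Cn f gs) xs z"
| pr0: "reval f xs y \<Longrightarrow> reval (Pr f g) (0 # xs) y"
| prS: "reval (Pr f g) (k # xs) y \<Longrightarrow> reval g (k # y # xs) z \<Longrightarrow> reval (Pr f g) (Suc k # xs) z"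
| mn: "reval f (x # xs) 0 \<Longrightarrow> (\<forall>y<x. \<exists>z. z > 0 \<and> reval f (y # xs) z) \<Longrightarrow> reval (Mn f) xs x"

definition total_recursive4 :: "(nat \<Rightarrow> nat \<Rightarrow> nat \<Rightarrow> nat \<Rightarrow> nat) \<Rightarrow> bool" where
  "total_recursive4 g \<longleftrightarrow> (\<exists>p. \<forall>a b c d. reval p [a, b, c, d] (g a b c d))"

definition rat_of_code :: "nat \<Rightarrow> rat" where
  "rat_of_code n = (case prod_decode n of (a, b) \<Rightarrow> Fract (int_decode a) (int b + 1))"

definition gauss_rat_of_code :: "nat \<Rightarrow> complex" where
  "gauss_rat_of_code n = (case prod_decode n of (a, b) \<Rightarrow>
      Complex (of_rat (rat_of_code a)) (of_rat (rat_of_code b)))"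

text \<open>An N x N complex matrix is represented by its entry function; only entries with
  indices below N are meaningful.\<close>
type_synonym cmat = "nat \<Rightarrow> nat \<Rightarrow> complex"

definition hermitian :: "nat \<Rightarrow> cmat \<Rightarrow> bool" where
  "hermitian N A \<longleftrightarrow> (\<forall>i<N. \<forall>j<N. A i j = cnj (A j i))"

definition psd :: "nat \<Rightarrow> cmat \<Rightarrow> bool" where
  "psd N A \<longleftrightarrow> hermitian N A \<and>
     (\<forall>v :: nat \<Rightarrow> complex. 0 \<le> Re (\<Sum>i<N. \<Sum>j<N. cnj (v i) * A i j * v j))"

definition loewner_le :: "nat \<Rightarrow> cmat \<Rightarrow> cmat \<Rightarrow> bool" where
  "loewner_le N A B \<longleftrightarrow> psd N (\<lambda>i j. B i j - A i j)"

definition mtrace :: "nat \<Rightarrow> cmat \<Rightarrow> complex" where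
  "mtrace N A = (\<Sum>i<N. A i i)"

definition Her_Q :: "nat \<Rightarrow> cmat \<Rightarrow> bool" where
  "Her_Q N A \<longleftrightarrow> hermitian N A \<and>
     (\<forall>i<N. \<forall>j<N. Re (A i j) \<in> \<rat> \<and> Im (A i j) \<in> \<rat>)"

text \<open>sigma N is the matrix in Her(N); only N \<ge> 1 is relevant.  The approximating
  total recursive function f(N,k) is given via a total recursive code function for its entries.\<close>
definition lsc_semi_density :: "(nat \<Rightarrow> cmat) \<Rightarrow> bool" where
  "lsc_semi_density \<sigma> \<longleftrightarrow>
     (\<forall>N\<ge>1. hermitian N (\<sigma> N) \<and> psd N (\<sigma> N) \<and> Re (mtrace N (\<sigma> N)) \<le> 1) \<and>
     (\<exists>f :: nat \<Rightarrow> nat \<Rightarrow> cmat.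
        (\<exists>g. total_recursive4 g \<and>
             (\<forall>N\<ge>1. \<forall>k i j. i < N \<longrightarrow> j < N \<longrightarrow> f N k i j = gauss_rat_of_code (g N k i j))) \<and>
        (\<forall>N\<ge>1. \<forall>k. Her_Q N (f N k)) \<and>
        (\<forall>N\<ge>1. \<forall>k. loewner_le N (f N k) (f N (Suc k))) \<and>
        (\<forall>N\<ge>1. \<forall>i<N. \<forall>j<N. (\<lambda>k. f N k i j) \<longlonglongrightarrow> \<sigma> N i j))"

definition quantum_universal :: "(nat \<Rightarrow> cmat) \<Rightarrow> bool" where
  "quantum_universal \<mu> \<longleftrightarrow> lsc_semi_density \<mu> \<and>
     (\<forall>\<sigma>. lsc_semi_density \<sigma> \<longrightarrow>
        (\<exists>c>0. \<forall>N\<ge>1. loewner_le N (\<lambda>i j. complex_of_real c * \<sigma> N i j) (\<mu> N)))"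

end

theory Submission
  imports Defs
begin

text \<open>
  Let \<open>g\<close> be the code of the increasing rational approximations \<open>f(N,k)\<close> of \<open>\<mu>(N)\<close>.
  For each \<open>N\<close>, search for the first stage \<open>k\<close> at which the diagonal of \<open>f(N,k)\<close>,
  scaled by \<open>N\<^sup>2\<close> and rounded down to a natural number, has mass at least \<open>N\<^sup>2 - 2N\<close>,
  and then take the first index \<open>i\<close> whose rounded entry is at most \<open>N\<close>. The projections
  \<open>\<sigma>(N) = |i\<rangle>\<langle>i|\<close> (and \<open>\<sigma>(N) = 0\<close> when the search does not end) form a lower
  semicomputable semi-density matrix, so universality gives \<open>c \<sigma>(N) \<le> \<mu>(N)\<close>, i.e.
  \<open>c \<le> \<mu>(N)\<^sub>i\<^sub>i\<close>. If \<open>tr \<mu>(N) = 1\<close>, the search ends and such an index exists;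
  writing \<open>x\<^sub>j = max 0 f(N,k)\<^sub>j\<^sub>j \<le> \<mu>(N)\<^sub>j\<^sub>j\<close>, we get
  \<open>\<mu>(N)\<^sub>i\<^sub>i \<le> x\<^sub>i + (1 - \<Sum>\<^sub>j x\<^sub>j) < (3N + 1) / N\<^sup>2\<close>, hence \<open>N c < 4\<close>.
\<close>

section \<open>Total computable functions\<close>

definition computable :: "nat \<Rightarrow> (nat list \<Rightarrow> nat) \<Rightarrow> bool" where
  "computable n F \<longleftrightarrow> (\<exists>p. \<forall>xs. length xs = n \<longrightarrow> reval p xs (F xs))"

definition decidable :: "nat \<Rightarrow> (nat list \<Rightarrow> bool) \<Rightarrow> bool" where
  "decidable n P \<longleftrightarrow> computable n (\<lambda>xs. of_bool (P xs))"

lemma computable_cong: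
  "computable n F \<Longrightarrow> (\<And>xs. length xs = n \<Longrightarrow> F xs = G xs) \<Longrightarrow> computable n G"
  unfolding computable_def by metis

lemma decidable_cong:
  "decidable n P \<Longrightarrow> (\<And>xs. length xs = n \<Longrightarrow> P xs \<longleftrightarrow> Q xs) \<Longrightarrow> decidable n Q"
  unfolding decidable_def by (erule computable_cong) simp

lemma computable_zero: "computable n (\<lambda>_. 0)"
  unfolding computable_def by (auto intro: reval.zr)

lemma computable_proj: "i < n \<Longrightarrow> computable n (\<lambda>xs. xs ! i)"
  unfolding computable_def by (auto intro!: exI[of _ "Pj i"] reval.pj)

lemma computable_hd: "computable (Suc n) hd"
  by (rule computable_cong[OF computable_proj[of 0]]) (auto simp: length_Suc_conv)

lemma computable_Suc_proj: "computable 1 (\<lambda>xs. Suc (xs ! 0))"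
  unfolding computable_def by (rule exI[of _ Sc]) (auto simp: length_Suc_conv intro: reval.sc)

lemma computable_compose:
  assumes "computable m H" "length Gs = m" "\<forall>G\<in>set Gs. computable n G"
  shows "computable n (\<lambda>xs. H (map (\<lambda>G. G xs) Gs))"
proof -
  obtain q where q: "\<And>ys. length ys = m \<Longrightarrow> reval q ys (H ys)"
    using assms(1) unfolding computable_def by blast
  obtain P where P: "\<And>G xs. G \<in> set Gs \<Longrightarrow> length xs = n \<Longrightarrow> reval (P G) xs (G xs)"
    using assms(3) unfolding computable_def by (metis bchoice)
  have "reval (Cn q (map P Gs)) xs (H (map (\<lambda>G. G xs) Gs))" if "length xs = n" for xs
  proof (rule reval.cn)
    show "list_all2 (\<lambda>p y. reval p xs y) (map P Gs) (map (\<lambda>G. G xs) Gs)"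
      using P that by (auto simp: list_all2_map1 list_all2_map2 intro: list.rel_refl_strong)
    show "reval q (map (\<lambda>G. G xs) Gs) (H (map (\<lambda>G. G xs) Gs))"
      using q assms(2) by simp
  qed
  then show ?thesis
    unfolding computable_def by blast
qed

lemma computable_compose1:
  "computable 1 (\<lambda>xs. h (xs ! 0)) \<Longrightarrow> computable n A \<Longrightarrow> computable n (\<lambda>xs. h (A xs))"
  using computable_compose[of 1 "\<lambda>xs. h (xs ! 0)" "[A]" n] by simp

lemma computable_compose2:
  "computable 2 (\<lambda>xs. h (xs ! 0) (xs ! 1)) \<Longrightarrow> computable n A \<Longrightarrow> computable n B \<Longrightarrow>
   computable n (\<lambda>xs. h (A xs) (B xs))"
  using computable_compose[of 2 "\<lambda>xs. h (xs ! 0) (xs ! 1)" "[A, B]" n] by simp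

lemma computable_compose4:
  "computable 4 (\<lambda>xs. h (xs ! 0) (xs ! 1) (xs ! 2) (xs ! 3)) \<Longrightarrow>
   computable n A \<Longrightarrow> computable n B \<Longrightarrow> computable n C \<Longrightarrow> computable n D \<Longrightarrow>
   computable n (\<lambda>xs. h (A xs) (B xs) (C xs) (D xs))"
  using computable_compose[of 4 "\<lambda>xs. h (xs ! 0) (xs ! 1) (xs ! 2) (xs ! 3)" "[A, B, C, D]" n]
  by (simp add: numeral_eq_Suc)

lemma computable_reindex:
  assumes "computable m H" "\<And>j. j < m \<Longrightarrow> r j < n"
  shows "computable n (\<lambda>xs. H (map (\<lambda>j. xs ! r j) [0..<m]))"
  using computable_compose[OF assms(1), of "map (\<lambda>j xs. xs ! r j) [0..<m]" n] assms(2)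
  by (simp add: comp_def computable_proj)

lemma computable_tl:
  assumes "computable n A"
  shows "computable (Suc n) (\<lambda>ys. A (tl ys))"
proof (rule computable_cong[OF computable_reindex[OF assms, of Suc]])
  show "A (map (\<lambda>j. ys ! Suc j) [0..<n]) = A (tl ys)" if "length ys = Suc n" for ys
  proof -
    have "map (\<lambda>j. ys ! Suc j) [0..<n] = tl ys"
      using that by (intro nth_equalityI) (auto simp: nth_tl)
    then show ?thesis by simp
  qed
qed simp

lemma computable_drop_second:
  assumes "computable (Suc n) (\<lambda>ys. H (hd ys) (tl ys))"
  shows "computable (Suc (Suc n)) (\<lambda>zs. H (hd zs) (tl (tl zs)))"
proof -
  define r where "r j = (if j = 0 then 0 else Suc j)" for j
  have map_eq: "map (\<lambda>j. zs ! r j) [0..<Suc n] = hd zs # tl (tl zs)"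
    if len: "length zs = Suc (Suc n)" for zs
  proof -
    obtain a b xs where zs: "zs = a # b # xs" and "length xs = n"
      using len by (auto simp: length_Suc_conv)
    then have "map (\<lambda>j. xs ! j) [0..<n] = xs"
      using map_nth[of xs] by simp
    then show ?thesis
      by (simp add: zs r_def map_upt_Suc del: upt_Suc)
  qed
  have reindexed: "computable (Suc (Suc n))
      (\<lambda>zs. H (hd (map (\<lambda>j. zs ! r j) [0..<Suc n])) (tl (map (\<lambda>j. zs ! r j) [0..<Suc n])))"
    by (rule computable_reindex[OF assms]) (simp add: r_def)
  show ?thesis
    by (rule computable_cong[OF reindexed]) (simp add: map_eq del: upt_Suc)
qed

lemma computable_Cons:
  assumes "computable (Suc n) F" "computable n M"
  shows "computable n (\<lambda>xs. F (M xs # xs))"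
proof -
  have "computable n (\<lambda>xs. F (map (\<lambda>G. G xs) (M # map (\<lambda>j xs. xs ! j) [0..<n])))"
    by (rule computable_compose[OF assms(1)]) (auto intro: assms(2) computable_proj)
  moreover have "map (\<lambda>G. G xs) (M # map (\<lambda>j xs. xs ! j) [0..<n]) = M xs # xs"
    if "length xs = n" for xs
    using map_nth[of xs] that by (simp add: comp_def)
  ultimately show ?thesis
    by (auto elim: computable_cong)
qed

lemma computable_Suc: "computable n A \<Longrightarrow> computable n (\<lambda>xs. Suc (A xs))"
  by (rule computable_compose1[OF computable_Suc_proj])

lemma computable_const: "computable n (\<lambda>_. c)"
  by (induction c) (auto intro: computable_zero computable_Suc)

lemma computable_prim_rec:
  assumes "computable n f" "computable (Suc (Suc n)) g"
    and F_0: "\<And>xs. length xs = n \<Longrightarrow> F (0 # xs) = f xs"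
    and F_Suc: "\<And>k xs. length xs = n \<Longrightarrow> F (Suc k # xs) = g (k # F (k # xs) # xs)"
  shows "computable (Suc n) F"
proof -
  obtain p where p: "\<And>xs. length xs = n \<Longrightarrow> reval p xs (f xs)"
    using assms(1) unfolding computable_def by blast
  obtain q where q: "\<And>zs. length zs = Suc (Suc n) \<Longrightarrow> reval q zs (g zs)"
    using assms(2) unfolding computable_def by blast
  have reval_Pr: "reval (Pr p q) (k # xs) (F (k # xs))" if "length xs = n" for k xs
  proof (induction k)
    case 0
    show ?case using reval.pr0[OF p[OF that]] F_0[OF that] by simp
  next
    case (Suc k)
    have "reval q (k # F (k # xs) # xs) (F (Suc k # xs))"
      using q[of "k # F (k # xs) # xs"] F_Suc[OF that] that by simp
    with Suc show ?case by (rule reval.prS)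
  qed
  show ?thesis
    unfolding computable_def
    by (rule exI[of _ "Pr p q"]) (auto simp: length_Suc_conv reval_Pr)
qed

lemma computable_minimize:
  assumes "computable (Suc n) F" "\<And>xs. length xs = n \<Longrightarrow> \<exists>y. F (y # xs) = 0"
  shows "computable n (\<lambda>xs. LEAST y. F (y # xs) = 0)"
proof -
  obtain p where p: "\<And>ys. length ys = Suc n \<Longrightarrow> reval p ys (F ys)"
    using assms(1) unfolding computable_def by blast
  have "reval (Mn p) xs (LEAST y. F (y # xs) = 0)" if len: "length xs = n" for xs
  proof (rule reval.mn)
    have "F ((LEAST y. F (y # xs) = 0) # xs) = 0"
      using assms(2)[OF len] by (rule LeastI_ex)
    then show "reval p ((LEAST y. F (y # xs) = 0) # xs) 0"
      using p[of "(LEAST y. F (y # xs) = 0) # xs"] len by simp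
    show "\<forall>y<(LEAST y. F (y # xs) = 0). \<exists>z>0. reval p (y # xs) z"
    proof (intro allI impI)
      fix y
      assume "y < (LEAST y. F (y # xs) = 0)"
      then have "F (y # xs) > 0"
        using not_less_Least by blast
      with p[of "y # xs"] len show "\<exists>z>0. reval p (y # xs) z"
        by auto
    qed
  qed
  then show ?thesis
    unfolding computable_def by blast
qed

lemma computable_add:
  assumes "computable n A" "computable n B"
  shows "computable n (\<lambda>xs. A xs + B xs)"
proof (rule computable_compose2[of "(+)", OF _ assms])
  show "computable 2 (\<lambda>xs. xs ! 0 + xs ! 1)"
    unfolding numeral_2_eq_2
    by (rule computable_prim_rec[OF computable_proj computable_Suc[OF computable_proj, of 1]])
      simp_all
qed

lemma computable_mult:
  assumes "computable n A" "computable n B"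
  shows "computable n (\<lambda>xs. A xs * B xs)"
proof (rule computable_compose2[of "(*)", OF _ assms])
  show "computable 2 (\<lambda>xs. xs ! 0 * xs ! 1)"
    unfolding numeral_2_eq_2
    by (rule computable_prim_rec[OF computable_zero computable_add[OF computable_proj computable_proj,
          of 1 _ 2]]) simp_all
qed

lemma computable_pred:
  assumes "computable n A"
  shows "computable n (\<lambda>xs. A xs - 1)"
proof (rule computable_compose1[of "\<lambda>a. a - 1", OF _ assms])
  show "computable 1 (\<lambda>xs. xs ! 0 - 1)"
    unfolding One_nat_def
    by (rule computable_prim_rec[OF computable_zero computable_proj[of 0]]) simp_all
qed

lemma computable_diff:
  assumes "computable n A" "computable n B"
  shows "computable n (\<lambda>xs. A xs - B xs)"
proof -
  have "computable 2 (\<lambda>xs. xs ! 1 - xs ! 0)"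
    unfolding numeral_2_eq_2
    by (rule computable_prim_rec[OF computable_proj computable_pred[OF computable_proj[of 1]]])
      simp_all
  from computable_compose2[of "\<lambda>b a. a - b", OF this assms(2,1)] show ?thesis
    by simp
qed

lemma decidable_eq_0:
  assumes "computable n A"
  shows "decidable n (\<lambda>xs. A xs = 0)"
  unfolding decidable_def
proof (rule computable_compose1[of "\<lambda>a. of_bool (a = 0)", OF _ assms])
  show "computable 1 (\<lambda>xs. of_bool (xs ! 0 = 0))"
    unfolding One_nat_def
    by (rule computable_prim_rec[where f = "\<lambda>_. 1" and g = "\<lambda>_. 0"])
      (auto intro: computable_const)
qed

lemma decidable_not: "decidable n P \<Longrightarrow> decidable n (\<lambda>xs. \<not> P xs)"
  unfolding decidable_def[of n P] by (drule decidable_eq_0) simp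

lemma decidable_conj:
  assumes "decidable n P" "decidable n Q"
  shows "decidable n (\<lambda>xs. P xs \<and> Q xs)"
  using computable_mult[OF assms[unfolded decidable_def]] unfolding decidable_def
  by (rule computable_cong) simp

lemma decidable_disj: "decidable n P \<Longrightarrow> decidable n Q \<Longrightarrow> decidable n (\<lambda>xs. P xs \<or> Q xs)"
  using decidable_not[OF decidable_conj[OF decidable_not decidable_not]] by simp

lemma decidable_imp: "decidable n P \<Longrightarrow> decidable n Q \<Longrightarrow> decidable n (\<lambda>xs. P xs \<longrightarrow> Q xs)"
  using decidable_disj[OF decidable_not] by simp

lemma decidable_le: "computable n A \<Longrightarrow> computable n B \<Longrightarrow> decidable n (\<lambda>xs. A xs \<le> B xs)"
  using decidable_eq_0[OF computable_diff] by simp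

lemma decidable_less: "computable n A \<Longrightarrow> computable n B \<Longrightarrow> decidable n (\<lambda>xs. A xs < B xs)"
  using decidable_le[OF computable_Suc] by (simp add: Suc_le_eq)

lemma decidable_eq: "computable n A \<Longrightarrow> computable n B \<Longrightarrow> decidable n (\<lambda>xs. A xs = B xs)"
  using decidable_conj[OF decidable_le decidable_le] by (simp add: order_eq_iff)

lemma computable_if:
  assumes "decidable n P" "computable n A" "computable n B"
  shows "computable n (\<lambda>xs. if P xs then A xs else B xs)"
proof -
  have "computable n (\<lambda>xs. of_bool (P xs) * A xs + of_bool (\<not> P xs) * B xs)"
    using assms decidable_not[OF assms(1)] unfolding decidable_def
    by (intro computable_add computable_mult)
  then show ?thesis
    by (rule computable_cong) simp
qed

lemma computable_Least:
  assumes "decidable (Suc n) (\<lambda>ys. R (hd ys) (tl ys))" "\<And>xs. length xs = n \<Longrightarrow> \<exists>y. R y xs"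
  shows "computable n (\<lambda>xs. LEAST y. R y xs)"
proof -
  have "computable n (\<lambda>xs. LEAST y. of_bool (\<not> R (hd (y # xs)) (tl (y # xs))) = (0::nat))"
    using decidable_not[OF assms(1)] assms(2) unfolding decidable_def
    by (intro computable_minimize) auto
  then show ?thesis
    by simp
qed

lemma computable_sum:
  assumes "computable n M" "computable (Suc n) (\<lambda>ys. P (hd ys) (tl ys))"
  shows "computable n (\<lambda>xs. \<Sum>i<M xs. P i xs)"
proof -
  have "computable (Suc n) (\<lambda>ys. \<Sum>i<hd ys. P i (tl ys))"
    by (rule computable_prim_rec[where f = "\<lambda>_. 0" and g = "\<lambda>zs. zs ! 1 + P (hd zs) (tl (tl zs))"])
      (auto intro: computable_zero computable_add computable_proj computable_drop_second[OF assms(2)])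
  from computable_Cons[OF this assms(1)] show ?thesis
    by simp
qed

lemma div_Suc_eq_Least: "a div Suc b = (LEAST q. a < Suc q * Suc b)"
proof (rule Least_equality[symmetric])
  show "a < Suc (a div Suc b) * Suc b"
    by (metis add.commute div_mult_mod_eq mod_less_divisor mult_Suc nat_add_left_cancel_less zero_less_Suc)
  show "a div Suc b \<le> q" if "a < Suc q * Suc b" for q
    using that by (metis less_Suc_eq_le less_mult_imp_div_less)
qed

lemma computable_div_Suc:
  assumes "computable n A" "computable n B"
  shows "computable n (\<lambda>xs. A xs div Suc (B xs))"
proof -
  have "computable n (\<lambda>xs. LEAST q. A xs < Suc q * Suc (B xs))"
  proof (rule computable_Least)
    show "decidable (Suc n) (\<lambda>ys. A (tl ys) < Suc (hd ys) * Suc (B (tl ys)))"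
      using assms by (intro decidable_less computable_mult computable_Suc computable_hd computable_tl)
    show "\<exists>q. A xs < Suc q * Suc (B xs)" for xs
      by (rule exI[of _ "A xs"]) simp
  qed
  then show ?thesis
    by (rule computable_cong) (simp add: div_Suc_eq_Least)
qed

lemma computable_div:
  assumes "computable n A" "computable n B"
  shows "computable n (\<lambda>xs. A xs div B xs)"
proof -
  have "computable n (\<lambda>xs. if B xs = 0 then 0 else A xs div Suc (B xs - 1))"
    using assms by (intro computable_if decidable_eq_0 computable_zero computable_div_Suc computable_pred)
  then show ?thesis
    by (rule computable_cong) simp
qed

lemma decidable_even:
  assumes "computable n A"
  shows "decidable n (\<lambda>xs. even (A xs))"
proof -
  have "decidable n (\<lambda>xs. A xs = 2 * (A xs div 2))"
    using assms by (intro decidable_eq computable_mult computable_div computable_const)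
  moreover have "a = 2 * (a div 2) \<longleftrightarrow> even a" for a :: nat
    by presburger
  ultimately show ?thesis
    by (rule decidable_cong)
qed

lemma computable_triangle:
  assumes "computable n A"
  shows "computable n (\<lambda>xs. triangle (A xs))"
proof -
  have "computable n (\<lambda>xs. A xs * Suc (A xs) div 2)"
    using assms by (intro computable_div computable_mult computable_Suc computable_const)
  then show ?thesis
    unfolding triangle_def .
qed

lemma prod_decode_eq_triangle:
  assumes "triangle s \<le> m" "m < triangle (Suc s)"
  shows "prod_decode m = (m - triangle s, s - (m - triangle s))"
proof -
  have "prod_encode (m - triangle s, s - (m - triangle s)) = m"
    using assms by (simp add: prod_encode_def)
  then show ?thesis
    by (metis prod_encode_inverse)
qed

lemma computable_prod_decode:
  assumes "computable n A"
  shows "computable n (\<lambda>xs. fst (prod_decode (A xs)))" "computable n (\<lambda>xs. snd (prod_decode (A xs)))"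
proof -
  define S where "S m = (LEAST s. m < triangle (Suc s))" for m
  have S_upper: "m < triangle (Suc (S m))" for m
  proof -
    have "m \<le> triangle m"
      by (induction m) auto
    then have "m < triangle (Suc m)"
      by simp
    then show ?thesis
      unfolding S_def by (rule LeastI)
  qed
  have S_lower: "triangle (S m) \<le> m" for m
  proof (cases "S m")
    case (Suc t)
    then have "t < S m"
      by simp
    then have "\<not> m < triangle (Suc t)"
      unfolding S_def by (rule not_less_Least)
    then show ?thesis
      using Suc by simp
  qed simp
  have S_computable: "computable n (\<lambda>xs. S (A xs))"
    unfolding S_def
  proof (rule computable_Least)
    show "decidable (Suc n) (\<lambda>ys. A (tl ys) < triangle (Suc (hd ys)))"
      using assms by (intro decidable_less computable_tl computable_triangle computable_Suc computable_hd)
    show "\<exists>s. A xs < triangle (Suc s)" for xs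
      using S_upper by blast
  qed
  have fst_computable: "computable n (\<lambda>xs. A xs - triangle (S (A xs)))"
    by (intro computable_diff computable_triangle assms S_computable)
  moreover have "computable n (\<lambda>xs. S (A xs) - (A xs - triangle (S (A xs))))"
    by (intro computable_diff S_computable fst_computable)
  moreover have "prod_decode m = (m - triangle (S m), S m - (m - triangle (S m)))" for m
    using S_lower S_upper by (rule prod_decode_eq_triangle)
  ultimately show "computable n (\<lambda>xs. fst (prod_decode (A xs)))"
    and "computable n (\<lambda>xs. snd (prod_decode (A xs)))"
    by simp_all
qed

lemma computable_total_recursive4:
  assumes "total_recursive4 g" "computable n A" "computable n B" "computable n C" "computable n D"
  shows "computable n (\<lambda>xs. g (A xs) (B xs) (C xs) (D xs))"
proof (rule computable_compose4[of g, OF _ assms(2-)])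
  obtain p where p: "\<And>a b c d. reval p [a, b, c, d] (g a b c d)"
    using assms(1) unfolding total_recursive4_def by blast
  show "computable 4 (\<lambda>xs. g (xs ! 0) (xs ! 1) (xs ! 2) (xs ! 3))"
    unfolding computable_def by (rule exI[of _ p]) (auto simp: length_Suc_conv numeral_eq_Suc p)
qed

section \<open>Decoding Gaussian rationals\<close>

definition gauss_code_one :: nat where
  "gauss_code_one = prod_encode (prod_encode (int_encode 1, 0), 0)"

lemma prod_decode_0: "prod_decode 0 = (0, 0)"
  using prod_encode_inverse[of "(0, 0)"] by (simp add: prod_encode_def)

lemma gauss_rat_of_code_0: "gauss_rat_of_code 0 = 0"
  by (simp add: gauss_rat_of_code_def rat_of_code_def prod_decode_0 int_decode_def sum_decode_def
      complex_eq_iff rat_number_collapse)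

lemma gauss_rat_of_code_one: "gauss_rat_of_code gauss_code_one = 1"
proof -
  have "int_decode 0 = 0"
    by (simp add: int_decode_def sum_decode_def)
  then show ?thesis
    by (simp add: gauss_rat_of_code_def rat_of_code_def gauss_code_one_def prod_decode_0
      complex_eq_iff rat_number_collapse)
qed

lemma nat_floor_Re_gauss_rat_of_code:
  "nat \<lfloor>real s * Re (gauss_rat_of_code c)\<rfloor> =
    (case prod_decode (fst (prod_decode c)) of (a, b) \<Rightarrow> if even a then s * (a div 2) div Suc b else 0)"
proof -
  obtain a b where ab: "prod_decode (fst (prod_decode c)) = (a, b)"
    by fastforce
  have Re: "Re (gauss_rat_of_code c) = of_int (int_decode a) / real (Suc b)"
    by (simp add: gauss_rat_of_code_def rat_of_code_def case_prod_beta ab Fract_of_int_quotient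
        of_rat_divide of_rat_add)
  show ?thesis
  proof (cases "even a")
    case True
    then have "real s * Re (gauss_rat_of_code c) = real (s * (a div 2)) / real (Suc b)"
      by (simp add: Re int_decode_def sum_decode_def)
    then show ?thesis
      using True ab by (simp only: floor_divide_of_nat_eq) simp
  next
    case False
    then have "int_decode a < 0"
      by (simp add: int_decode_def sum_decode_def)
    then have "real s * Re (gauss_rat_of_code c) \<le> 0"
      by (simp add: Re mult_nonneg_nonpos divide_nonpos_pos)
    then show ?thesis
      using False ab by simp
  qed
qed

lemma computable_nat_floor_Re_gauss_rat_of_code:
  assumes "computable n S" "computable n C"
  shows "computable n (\<lambda>xs. nat \<lfloor>real (S xs) * Re (gauss_rat_of_code (C xs))\<rfloor>)"
  unfolding nat_floor_Re_gauss_rat_of_code case_prod_beta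
  using assms
  by (intro computable_if decidable_even computable_div computable_mult computable_prod_decode
      computable_Suc computable_const)

section \<open>Positive semidefinite matrices\<close>

definition matrix_unit :: "nat \<Rightarrow> cmat" where
  "matrix_unit a = (\<lambda>i j. if i = a \<and> j = a then 1 else 0)"

lemma psd_diag_nonneg:
  assumes "psd N A" "a < N"
  shows "0 \<le> Re (A a a)"
proof -
  define v :: "nat \<Rightarrow> complex" where "v i = (if i = a then 1 else 0)" for i
  have "cnj (v i) * A i j * v j = (if j = a then if i = a then A a a else 0 else 0)" for i j
    by (simp add: v_def)
  then have "(\<Sum>i<N. \<Sum>j<N. cnj (v i) * A i j * v j) = A a a"
    using assms(2) by simp
  moreover have "0 \<le> Re (\<Sum>i<N. \<Sum>j<N. cnj (v i) * A i j * v j)"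
    using assms(1) unfolding psd_def by blast
  ultimately show ?thesis
    by simp
qed

lemma psd_matrix_unit: "psd N (matrix_unit a)"
proof -
  have "cnj (v i) * matrix_unit a i j * v j = (if j = a then if i = a then cnj (v a) * v a else 0 else 0)"
    for v :: "nat \<Rightarrow> complex" and i j
    by (simp add: matrix_unit_def)
  then have "(\<Sum>i<N. \<Sum>j<N. cnj (v i) * matrix_unit a i j * v j) = (if a < N then cnj (v a) * v a else 0)"
    for v :: "nat \<Rightarrow> complex"
    by simp
  moreover have "0 \<le> Re (cnj z * z)" for z :: complex
    by (simp add: complex_mult_cnj)
  moreover have "hermitian N (matrix_unit a)"
    by (simp add: hermitian_def matrix_unit_def)
  ultimately show ?thesis
    unfolding psd_def by simp
qed

lemma psd_zero: "psd N (\<lambda>i j. 0)"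
  by (simp add: psd_def hermitian_def)

lemma trace_matrix_unit_le_1: "Re (mtrace N (matrix_unit a)) \<le> 1"
  by (simp add: mtrace_def matrix_unit_def)

lemma loewner_le_scaled_matrix_unit_diag:
  assumes "loewner_le N (\<lambda>i j. complex_of_real c * matrix_unit a i j) A" "a < N"
  shows "c \<le> Re (A a a)"
  using psd_diag_nonneg[OF assms[unfolded loewner_le_def]] by (simp add: matrix_unit_def)

lemma loewner_incseq_diag_le_lim:
  assumes "\<And>k. loewner_le N (A k) (A (Suc k))" "(\<lambda>k. A k i i) \<longlonglongrightarrow> B" "i < N"
  shows "Re (A k i i) \<le> Re B"
proof (rule incseq_le[where X = "\<lambda>k. Re (A k i i)"])
  show "incseq (\<lambda>k. Re (A k i i))"
    using psd_diag_nonneg[OF assms(1)[unfolded loewner_le_def] assms(3)] by (simp add: incseq_SucI)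
  show "(\<lambda>k. Re (A k i i)) \<longlonglongrightarrow> Re B"
    using assms(2) by (rule tendsto_Re)
qed

section \<open>The test states\<close>

context
  fixes g :: "nat \<Rightarrow> nat \<Rightarrow> nat \<Rightarrow> nat \<Rightarrow> nat"
begin

text \<open>Negative approximations get weight \<open>0\<close>; this loses nothing because the diagonal
  of \<open>\<mu>(N)\<close> is nonnegative, and it keeps the search within natural-number arithmetic.\<close>

definition weight :: "nat \<Rightarrow> nat \<Rightarrow> nat \<Rightarrow> nat" where
  "weight N k i = nat \<lfloor>real (N * N) * Re (gauss_rat_of_code (g N k i i))\<rfloor>"

definition nearly_full :: "nat \<Rightarrow> nat \<Rightarrow> bool" where
  "nearly_full N k \<longleftrightarrow> N * N \<le> (\<Sum>i<N. weight N k i) + 2 * N"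

definition light_index :: "nat \<Rightarrow> nat \<Rightarrow> nat" where
  "light_index N k = (LEAST i. N \<le> i \<or> weight N k i \<le> N)"

definition first_nearly_full_upto :: "nat \<Rightarrow> nat \<Rightarrow> nat" where
  "first_nearly_full_upto N k = (LEAST k'. k' \<le> k \<longrightarrow> nearly_full N k')"

text \<open>The \<open>k\<close>-th approximation of \<open>test_state\<close> only searches the stages up to \<open>k\<close>;
  \<open>first_nearly_full_upto N k = Suc k\<close> means that none of them is nearly full.\<close>

definition test_state_code :: "nat \<Rightarrow> nat \<Rightarrow> nat \<Rightarrow> nat \<Rightarrow> nat" where
  "test_state_code N k i j =
    (if first_nearly_full_upto N k \<le> k \<and> i = j \<and> i = light_index N (first_nearly_full_upto N k)
     then gauss_code_one else 0)"

definition test_state :: "nat \<Rightarrow> cmat" where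
  "test_state N =
    (if \<exists>k. nearly_full N k then matrix_unit (light_index N (LEAST k. nearly_full N k)) else (\<lambda>i j. 0))"

lemma first_nearly_full_upto_le_iff:
  "first_nearly_full_upto N k \<le> k \<longleftrightarrow> (\<exists>k'\<le>k. nearly_full N k')"
proof
  assume "first_nearly_full_upto N k \<le> k"
  then show "\<exists>k'\<le>k. nearly_full N k'"
    unfolding first_nearly_full_upto_def by (metis (mono_tags, lifting) LeastI_ex le_refl not_less_eq_eq)
next
  assume "\<exists>k'\<le>k. nearly_full N k'"
  then show "first_nearly_full_upto N k \<le> k"
    unfolding first_nearly_full_upto_def by (metis (mono_tags, lifting) Least_le order_trans)
qed

lemma first_nearly_full_upto_eq_Least:
  assumes "k' \<le> k" "nearly_full N k'"
  shows "first_nearly_full_upto N k = (LEAST k. nearly_full N k)"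
  unfolding first_nearly_full_upto_def
proof (rule Least_equality)
  show "(LEAST k. nearly_full N k) \<le> k \<longrightarrow> nearly_full N (LEAST k. nearly_full N k)"
    using assms(2) by (rule LeastI[THEN impI])
  show "(LEAST k. nearly_full N k) \<le> y" if "y \<le> k \<longrightarrow> nearly_full N y" for y
    using that assms by (metis Least_le nle_le order_trans)
qed

lemma gauss_rat_of_test_state_code:
  "gauss_rat_of_code (test_state_code N k i j) =
    (if \<exists>k'\<le>k. nearly_full N k' then matrix_unit (light_index N (LEAST k. nearly_full N k)) i j else 0)"
  using first_nearly_full_upto_le_iff[of N k] first_nearly_full_upto_eq_Least[of _ k N]
  by (auto simp: test_state_code_def matrix_unit_def gauss_rat_of_code_0 gauss_rat_of_code_one)

end

context
  fixes g :: "nat \<Rightarrow> nat \<Rightarrow> nat \<Rightarrow> nat \<Rightarrow> nat"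
  assumes g: "total_recursive4 g"
begin

lemma computable_weight:
  assumes "computable n A" "computable n B" "computable n C"
  shows "computable n (\<lambda>xs. weight g (A xs) (B xs) (C xs))"
  unfolding weight_def
  by (intro computable_nat_floor_Re_gauss_rat_of_code computable_mult computable_total_recursive4[OF g]
      assms)

lemma decidable_nearly_full:
  assumes "computable n A" "computable n B"
  shows "decidable n (\<lambda>xs. nearly_full g (A xs) (B xs))"
  unfolding nearly_full_def
  by (intro decidable_le computable_add computable_mult computable_const computable_sum computable_weight
      computable_tl computable_hd assms)

lemma computable_first_nearly_full_upto:
  assumes "computable n A" "computable n B"
  shows "computable n (\<lambda>xs. first_nearly_full_upto g (A xs) (B xs))"
  unfolding first_nearly_full_upto_def
proof (rule computable_Least)
  show "decidable (Suc n) (\<lambda>ys. hd ys \<le> B (tl ys) \<longrightarrow> nearly_full g (A (tl ys)) (hd ys))"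
    by (intro decidable_imp decidable_le decidable_nearly_full computable_hd computable_tl assms)
  show "\<exists>k'. k' \<le> B xs \<longrightarrow> nearly_full g (A xs) k'" for xs
    by (rule exI[of _ "Suc (B xs)"]) simp
qed

lemma computable_light_index:
  assumes "computable n A" "computable n B"
  shows "computable n (\<lambda>xs. light_index g (A xs) (B xs))"
  unfolding light_index_def
proof (rule computable_Least)
  show "decidable (Suc n)
      (\<lambda>ys. A (tl ys) \<le> hd ys \<or> weight g (A (tl ys)) (B (tl ys)) (hd ys) \<le> A (tl ys))"
    by (intro decidable_disj decidable_le computable_weight computable_hd computable_tl assms)
  show "\<exists>i. A xs \<le> i \<or> weight g (A xs) (B xs) i \<le> A xs" for xs
    by blast
qed

lemma total_recursive4_test_state_code: "total_recursive4 (test_state_code g)"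
proof -
  have "computable 4 (\<lambda>xs. test_state_code g (xs ! 0) (xs ! 1) (xs ! 2) (xs ! 3))"
    unfolding test_state_code_def
    by (intro computable_if decidable_conj decidable_le decidable_eq computable_first_nearly_full_upto
        computable_light_index computable_proj computable_const) simp_all
  then obtain p where
    "\<And>xs. length xs = 4 \<Longrightarrow> reval p xs (test_state_code g (xs ! 0) (xs ! 1) (xs ! 2) (xs ! 3))"
    unfolding computable_def by blast
  from this[of "[_, _, _, _]"] show ?thesis
    unfolding total_recursive4_def by auto
qed

end

lemma lsc_semi_density_test_state:
  assumes "total_recursive4 g"
  shows "lsc_semi_density (test_state g)"
proof -
  define f where "f N k i j = gauss_rat_of_code (test_state_code g N k i j)" for N k i j
  have f_eq: "f N k =
      (if \<exists>k'\<le>k. nearly_full g N k'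
       then matrix_unit (light_index g N (LEAST k. nearly_full g N k)) else (\<lambda>i j. 0))" for N k
    by (auto simp: fun_eq_iff f_def gauss_rat_of_test_state_code)
  have "psd N (test_state g N)" for N
    by (simp add: test_state_def psd_matrix_unit psd_zero)
  moreover have "Re (mtrace N (test_state g N)) \<le> 1" for N
    using trace_matrix_unit_le_1 by (simp add: test_state_def) (simp add: mtrace_def)
  moreover have "Her_Q N (f N k)" for N k
    by (simp add: f_eq Her_Q_def hermitian_def matrix_unit_def)
  moreover have "loewner_le N (f N k) (f N (Suc k))" for N k
    using le_SucI by (fastforce simp: f_eq loewner_le_def psd_matrix_unit psd_zero)
  moreover have "(\<lambda>k. f N k i j) \<longlonglongrightarrow> test_state g N i j" for N i j
  proof (cases "\<exists>k. nearly_full g N k")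
    case True
    then obtain k0 where "nearly_full g N k0"
      by blast
    then have "\<forall>\<^sub>F k in sequentially. f N k i j = test_state g N i j"
      unfolding eventually_sequentially by (auto simp: f_eq test_state_def)
    then show ?thesis
      by (rule tendsto_eventually)
  next
    case False
    then show ?thesis
      by (simp add: f_eq test_state_def)
  qed
  ultimately show ?thesis
    unfolding lsc_semi_density_def psd_def
    using assms total_recursive4_test_state_code
    by (blast intro!: exI[of _ f] exI[of _ "test_state_code g"] f_def)
qed

section \<open>Full trace forces a small universality constant\<close>

lemma real_nat_floor_le_max: "real (nat \<lfloor>y\<rfloor>) \<le> max 0 y"
  by (cases "0 \<le> y") auto

lemma max_less_real_nat_floor_add_1: "max 0 y < real (nat \<lfloor>y\<rfloor>) + 1"
  by (cases "0 \<le> y") (auto simp: real_of_int_floor_add_one_gt)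

lemma ex_mult_le_1_if_sum_le_1:
  fixes a :: "nat \<Rightarrow> real"
  assumes "(\<Sum>i<N. a i) \<le> 1" "0 < N"
  shows "\<exists>i<N. real N * a i \<le> 1"
proof (rule ccontr)
  assume "\<not> (\<exists>i<N. real N * a i \<le> 1)"
  then have "(\<Sum>i<N. 1) < (\<Sum>i<N. real N * a i)"
    using assms(2) by (intro sum_strict_mono) auto
  then show False
    using assms mult_left_mono[OF assms(1), of "real N"] by (simp add: sum_distrib_left[symmetric])
qed

locale lsc_approximation =
  fixes \<mu> :: "nat \<Rightarrow> cmat" and f :: "nat \<Rightarrow> nat \<Rightarrow> cmat" and g :: "nat \<Rightarrow> nat \<Rightarrow> nat \<Rightarrow> nat \<Rightarrow> nat"
  assumes psd_mu: "1 \<le> N \<Longrightarrow> psd N (\<mu> N)"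
    and f_code: "1 \<le> N \<Longrightarrow> i < N \<Longrightarrow> j < N \<Longrightarrow> f N k i j = gauss_rat_of_code (g N k i j)"
    and f_mono: "1 \<le> N \<Longrightarrow> loewner_le N (f N k) (f N (Suc k))"
    and f_lim: "1 \<le> N \<Longrightarrow> i < N \<Longrightarrow> j < N \<Longrightarrow> (\<lambda>k. f N k i j) \<longlonglongrightarrow> \<mu> N i j"
begin

lemma approx_diag_le: "1 \<le> N \<Longrightarrow> i < N \<Longrightarrow> Re (f N k i i) \<le> Re (\<mu> N i i)"
  by (rule loewner_incseq_diag_le_lim[where A = "f N"]) (auto intro: f_mono f_lim)

lemma weight_eq: "1 \<le> N \<Longrightarrow> i < N \<Longrightarrow> weight g N k i = nat \<lfloor>real (N * N) * Re (f N k i i)\<rfloor>"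
  by (simp add: weight_def f_code)

lemma nearly_full_exists:
  assumes N: "1 \<le> N" and full: "Re (mtrace N (\<mu> N)) = 1"
  shows "\<exists>k. nearly_full g N k"
proof -
  have "(\<lambda>k. \<Sum>i<N. Re (f N k i i)) \<longlonglongrightarrow> (\<Sum>i<N. Re (\<mu> N i i))"
    using N by (intro tendsto_sum tendsto_Re f_lim) auto
  moreover have "(\<Sum>i<N. Re (\<mu> N i i)) = 1"
    using full by (simp add: mtrace_def Re_sum)
  moreover have "1 - 1 / real N < 1"
    using N by simp
  ultimately have "\<forall>\<^sub>F k in sequentially. 1 - 1 / real N < (\<Sum>i<N. Re (f N k i i))"
    by (simp add: order_tendstoD(1))
  then obtain k where k: "1 - 1 / real N < (\<Sum>i<N. Re (f N k i i))"
    unfolding eventually_sequentially by blast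
  have "real (N * N) - real N = real (N * N) * (1 - 1 / real N)"
    using N by (simp add: field_simps)
  also have "\<dots> < (\<Sum>i<N. real (N * N) * Re (f N k i i))"
    using k N by (simp add: sum_distrib_left[symmetric])
  also have "\<dots> \<le> (\<Sum>i<N. real (weight g N k i) + 1)"
  proof (rule sum_mono)
    fix i
    assume "i \<in> {..<N}"
    then have "max 0 (real (N * N) * Re (f N k i i)) < real (weight g N k i) + 1"
      using weight_eq[OF N] max_less_real_nat_floor_add_1 by simp
    then show "real (N * N) * Re (f N k i i) \<le> real (weight g N k i) + 1"
      by linarith
  qed
  also have "\<dots> = real ((\<Sum>i<N. weight g N k i) + N)"
    by (simp add: sum.distrib)
  finally have "N * N < (\<Sum>i<N. weight g N k i) + 2 * N"
    by linarith
  then have "nearly_full g N k"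
    unfolding nearly_full_def by linarith
  then show ?thesis ..
qed

lemma light_index_bound:
  assumes N: "1 \<le> N" and trace: "Re (mtrace N (\<mu> N)) \<le> 1"
  shows "light_index g N k < N" "weight g N k (light_index g N k) \<le> N"
proof -
  have "(\<Sum>i<N. Re (\<mu> N i i)) \<le> 1"
    using trace by (simp add: mtrace_def Re_sum)
  then obtain i1 where i1: "i1 < N" "real N * Re (\<mu> N i1 i1) \<le> 1"
    using ex_mult_le_1_if_sum_le_1 N by auto
  have "real (weight g N k i1) \<le> max 0 (real (N * N) * Re (f N k i1 i1))"
    using weight_eq[OF N i1(1)] real_nat_floor_le_max by simp
  also have "\<dots> \<le> real (N * N) * Re (\<mu> N i1 i1)"
    using mult_left_mono[OF approx_diag_le[OF N i1(1)], of "real (N * N)" k]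
      psd_diag_nonneg[OF psd_mu[OF N] i1(1)] by simp
  also have "\<dots> = real N * (real N * Re (\<mu> N i1 i1))"
    by simp
  also have "\<dots> \<le> real N"
    using i1(2) mult_left_mono[OF i1(2), of "real N"] by simp
  finally have weight_i1: "weight g N k i1 \<le> N"
    by simp
  then have "light_index g N k \<le> i1"
    unfolding light_index_def by (intro Least_le) simp
  moreover have "N \<le> light_index g N k \<or> weight g N k (light_index g N k) \<le> N"
    unfolding light_index_def using weight_i1 by (rule LeastI[where k = i1, OF disjI2])
  ultimately show "light_index g N k < N" "weight g N k (light_index g N k) \<le> N"
    using i1(1) by auto
qed

lemma nearly_full_diag_bound:
  assumes N: "1 \<le> N" and full: "Re (mtrace N (\<mu> N)) = 1"
    and "nearly_full g N k" and i: "i < N" "weight g N k i \<le> N"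
  shows "real (N * N) * Re (\<mu> N i i) < 3 * real N + 1"
proof -
  define D where "D = real (N * N)"
  define y where "y j = max 0 (D * Re (f N k j j))" for j
  have y_le: "y j \<le> D * Re (\<mu> N j j)" if "j < N" for j
    using mult_left_mono[OF approx_diag_le[OF N that], of D k] psd_diag_nonneg[OF psd_mu[OF N] that]
    by (simp add: y_def D_def)
  have "D * Re (\<mu> N i i) - y i \<le> (\<Sum>j<N. D * Re (\<mu> N j j) - y j)"
    using i y_le by (intro member_le_sum) auto
  also have "\<dots> = D - (\<Sum>j<N. y j)"
    using full by (simp add: sum_subtractf sum_distrib_left[symmetric] mtrace_def Re_sum)
  also have "\<dots> \<le> 2 * real N"
  proof -
    have "D \<le> real (\<Sum>j<N. weight g N k j) + 2 * real N"
      using \<open>nearly_full g N k\<close> unfolding nearly_full_def D_def by linarith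
    also have "real (\<Sum>j<N. weight g N k j) \<le> (\<Sum>j<N. y j)"
      unfolding of_nat_sum y_def D_def using weight_eq[OF N] real_nat_floor_le_max
      by (intro sum_mono) simp
    finally show ?thesis
      by simp
  qed
  finally have "D * Re (\<mu> N i i) \<le> y i + 2 * real N"
    by simp
  moreover have "y i < real (weight g N k i) + 1"
    using weight_eq[OF N i(1)] max_less_real_nat_floor_add_1 by (simp add: y_def D_def)
  ultimately show ?thesis
    using i(2) unfolding D_def by linarith
qed

lemma full_trace_imp_mult_less_4:
  assumes N: "1 \<le> N" and full: "Re (mtrace N (\<mu> N)) = 1"
    and dominated: "loewner_le N (\<lambda>i j. complex_of_real c * test_state g N i j) (\<mu> N)"
  shows "real N * c < 4"
proof -
  define k0 where "k0 = (LEAST k. nearly_full g N k)"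
  define i0 where "i0 = light_index g N k0"
  have k0: "nearly_full g N k0"
    unfolding k0_def using nearly_full_exists[OF N full] by (rule LeastI_ex)
  have i0: "i0 < N" "weight g N k0 i0 \<le> N"
    unfolding i0_def using light_index_bound[OF N] full by simp_all
  have "test_state g N = matrix_unit i0"
    unfolding test_state_def i0_def k0_def using k0 by auto
  then have "c \<le> Re (\<mu> N i0 i0)"
    using loewner_le_scaled_matrix_unit_diag[OF _ i0(1)] dominated by simp
  then have "real N * (real N * c) \<le> real (N * N) * Re (\<mu> N i0 i0)"
    using mult_left_mono[of c "Re (\<mu> N i0 i0)" "real (N * N)"] by simp
  also have "\<dots> < 3 * real N + 1"
    by (rule nearly_full_diag_bound[OF N full k0 i0])
  also have "\<dots> \<le> real N * 4"
    using N by simp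
  finally show ?thesis
    using N by simp
qed

end

lemma lsc_semi_density_approximation:
  assumes "lsc_semi_density \<mu>"
  obtains f g where "total_recursive4 g" "lsc_approximation \<mu> f g"
proof -
  obtain f g where g: "total_recursive4 g"
    and "\<forall>N\<ge>1. \<forall>k i j. i < N \<longrightarrow> j < N \<longrightarrow> f N k i j = gauss_rat_of_code (g N k i j)"
    and "\<forall>N\<ge>1. \<forall>k. loewner_le N (f N k) (f N (Suc k))"
    and "\<forall>N\<ge>1. \<forall>i<N. \<forall>j<N. (\<lambda>k. f N k i j) \<longlonglongrightarrow> \<mu> N i j"
    using assms unfolding lsc_semi_density_def by auto
  moreover have "\<forall>N\<ge>1. psd N (\<mu> N)"
    using assms unfolding lsc_semi_density_def by simp
  ultimately have "lsc_approximation \<mu> f g"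
    by unfold_locales simp_all
  with g show ?thesis
    by (rule that)
qed

theorem mainTheorem14:
  assumes "quantum_universal \<mu>"
  shows "finite {N :: nat. N \<ge> 1 \<and> \<not> Re (mtrace N (\<mu> N)) < 1}"
proof -
  have lsc: "lsc_semi_density \<mu>"
    using assms unfolding quantum_universal_def by blast
  then obtain f g where g: "total_recursive4 g" and approx: "lsc_approximation \<mu> f g"
    by (rule lsc_semi_density_approximation)
  obtain c where "c > 0"
    and dominated: "\<And>N. 1 \<le> N \<Longrightarrow> loewner_le N (\<lambda>i j. complex_of_real c * test_state g N i j) (\<mu> N)"
    using assms lsc_semi_density_test_state[OF g] unfolding quantum_universal_def by blast
  have "real N < 4 / c" if "1 \<le> N" "\<not> Re (mtrace N (\<mu> N)) < 1" for N
  proof -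
    have "Re (mtrace N (\<mu> N)) = 1"
      using lsc that unfolding lsc_semi_density_def by force
    then have "real N * c < 4"
      using lsc_approximation.full_trace_imp_mult_less_4[OF approx that(1) _ dominated[OF that(1)]] by blast
    then show ?thesis
      using \<open>c > 0\<close> by (simp add: field_simps)
  qed
  moreover have "N \<le> nat \<lceil>4 / c\<rceil>" if "real N < 4 / c" for N
    using that by linarith
  ultimately have "{N :: nat. N \<ge> 1 \<and> \<not> Re (mtrace N (\<mu> N)) < 1} \<subseteq> {..nat \<lceil>4 / c\<rceil>}"
    by auto
  then show ?thesis
    by (rule finite_subset) simp
qed

end
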